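(* Let $d\ge2$, let $\sigma:\mathbb R\to\mathbb R$ be a non-linear (not affine) Lipschitz function applied element-wise to vectors in $\mathbb R^d$, let $\mathscr A\subseteq\mathbb R^{d\times d}$, and consider the control family $$\mathcal F=\{x\mapsto W\sigma(Ax+b) : W\in\mathbb R^{d\times d}\text{ diagonal},\ A\in\mathscr A,\ b\in\mathbb R^d\}.$$ If for every $l=1,\dots,d$ the set $\{v\in\mathbb R^d : v \text{ is the } l\text{-th row of } A \text{ for some } A\in\mathscr A\}$ equals $\mathbb R^d$, then the control system with control family $\mathcal F$ possesses the universal interpolation property.
   Context: For $g\in\mathcal F$, $\varphi^g_t$ is the time-$t$ flow of $\dot x=g(x)$; $\mathcal A_{\mathcal F}$ is the set of all finite compositions $\varphi^{f_k}_{t_k}\circ\cdots\circ\varphi^{f_1}_{t_1}$, $f_i\in\mathcal F$, $t_i\ge0$. Universal interpolation property: for every $\varepsilon>0$, every $N$ and every data $(x_i,y_i)_{i=1}^N$ in $\mathbb R^d\times\mathbb R^d$ with $x_i\ne x_j$, $y_i\ne y_j$ for $i\ne j$, there is $\varphi\in\mathcal A_{\mathcal F}$ with $\|\varphi(x_i)-y_i\|_\infty\le\varepsilon$ for all $i$. *)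

theory Defs
  imports "HOL-Analysis.Analysis"
begin

text \<open>Time-t flow of x' = g(x), started at x: the value at time t of a solution
  on [0,t] (the vector fields considered are globally Lipschitz, so the solution
  exists and is unique).\<close>
definition flow :: "(real^'d \<Rightarrow> real^'d) \<Rightarrow> real \<Rightarrow> real^'d \<Rightarrow> real^'d" where
  "flow g t x = (THE y. \<exists>u::real \<Rightarrow> real^'d. u 0 = x \<and> u t = y \<and>
      (\<forall>s\<in>{0..t}. (u has_vector_derivative g (u s)) (at s within {0..t})))"

inductive_set flow_compositions :: "(real^'d \<Rightarrow> real^'d) set \<Rightarrow> (real^'d \<Rightarrow> real^'d) set"
  for F where
  id_in: "id \<in> flow_compositions F"
| comp_in: "\<phi> \<in> flow_compositions F \<Longrightarrow> f \<in> F \<Longrightarrow> t \<ge> 0 \<Longrightarrow>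
      (flow f t \<circ> \<phi>) \<in> flow_compositions F"

definition universal_interpolation :: "(real^'d \<Rightarrow> real^'d) set \<Rightarrow> bool" where
  "universal_interpolation F \<longleftrightarrow>
    (\<forall>\<epsilon>>0. \<forall>N::nat. \<forall>x y :: nat \<Rightarrow> real^'d.
      (\<forall>i<N. \<forall>j<N. i \<noteq> j \<longrightarrow> x i \<noteq> x j \<and> y i \<noteq> y j) \<longrightarrow>
      (\<exists>\<phi>\<in>flow_compositions F. \<forall>i<N. \<forall>l. \<bar>\<phi> (x i) $ l - y i $ l\<bar> \<le> \<epsilon>))"

definition elementwise :: "(real \<Rightarrow> real) \<Rightarrow> real^'d \<Rightarrow> real^'d" where
  "elementwise \<sigma> v = (\<chi> i. \<sigma> (v $ i))"

definition is_diagonal :: "real^'d^'d \<Rightarrow> bool" where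
  "is_diagonal W \<longleftrightarrow> (\<forall>i j. i \<noteq> j \<longrightarrow> W $ i $ j = 0)"

definition control_family :: "(real \<Rightarrow> real) \<Rightarrow> (real^'d^'d) set \<Rightarrow> (real^'d \<Rightarrow> real^'d) set" where
  "control_family \<sigma> \<A> = {(\<lambda>x. W *v elementwise \<sigma> (A *v x + b)) | W A b.
       is_diagonal W \<and> A \<in> \<A>}"

end

theory Submission
  imports Defs "HOL-Computational_Algebra.Polynomial" "HOL-Computational_Algebra.Fundamental_Theorem_Algebra"
begin

(*
  Let V be the span of the ridge functions s \<mapsto> \<sigma>(a s + b). If V could not interpolate
  arbitrary data at distinct nodes t\<^sub>i, some nontrivial relation
  \<Sum>\<^sub>i c\<^sub>i \<sigma>(a t\<^sub>i + b) = 0 would hold for all a, b. Let m be the first index with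
  \<Sum>\<^sub>i c\<^sub>i t\<^sub>i\<^sup>m \<noteq> 0. For the m-th antiderivative A\<^sub>m of \<sigma>, the function
  b \<mapsto> \<Sum>\<^sub>i c\<^sub>i A\<^sub>m(a t\<^sub>i + b) is a polynomial of degree < m, while Taylor expansion
  in a shows that it equals a\<^sup>m (\<Sum>\<^sub>i c\<^sub>i t\<^sub>i\<^sup>m) \<sigma>(b) / m! up to O(a\<^sup>m\<^sup>+\<^sup>1),
  uniformly in b because \<sigma> is Lipschitz. So \<sigma> is a uniform limit of polynomials of
  bounded degree, hence a polynomial, hence affine.

  For h \<in> V and a vector a with a\<^sub>l = 0, the shear x \<mapsto> x + h(a \<bullet> x) e\<^sub>l is a
  composition of flows of the family: the field x \<mapsto> k \<sigma>(a \<bullet> x + b) e\<^sub>l is in the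
  family, and a \<bullet> x stays constant along its flow lines, so its time-1 map is such a shear.
  Shears are invertible, and three rounds of them move any N distinct points exactly onto
  the configuration i e\<^sub>p (i < N): make a coordinate q injective on the points, write
  the index i into coordinate p, and clear all other coordinates. Composing one such map
  with the inverse of another interpolates exactly.
*)

section \<open>Linear relations between dilations of a Lipschitz function\<close>

lemma poly_antiderivative_exists:
  fixes p :: "real poly"
  obtains P where "pderiv P = p" and "degree P \<le> Suc (degree p)"
proof
  define P where "P = (\<Sum>k\<le>degree p. monom (coeff p k / real (Suc k)) (Suc k))"
  have "pderiv P = (\<Sum>k\<le>degree p. pderiv (monom (coeff p k / real (Suc k)) (Suc k)))"
    using higher_pderiv_sum[of 1] by (simp add: P_def)
  also have "\<dots> = (\<Sum>k\<le>degree p. monom (coeff p k) k)"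
    by (simp add: pderiv_monom del: of_nat_Suc)
  finally show "pderiv P = p"
    by (simp add: poly_as_sum_of_monoms)
  show "degree P \<le> Suc (degree p)"
    unfolding P_def by (rule degree_sum_le) (auto intro: order.trans[OF degree_monom_le])
qed

lemma derivative_chain_vanishing_imp_poly:
  fixes g :: "nat \<Rightarrow> real \<Rightarrow> real"
  assumes "\<And>j x. j \<le> K \<Longrightarrow> (g j has_real_derivative g (Suc j) x) (at x)"
    and "\<And>x. g (Suc K) x = 0"
  shows "\<exists>p. (\<forall>x. g 0 x = poly p x) \<and> degree p \<le> K"
  using assms
proof (induction K arbitrary: g)
  case 0
  then have "\<And>x. g 0 x = g 0 0"
    using DERIV_isconst_all by fastforce
  then show ?case
    by (intro exI[of _ "[:g 0 0:]"]) auto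
next
  case (Suc K)
  obtain p where p: "\<And>x. g 1 x = poly p x" and "degree p \<le> K"
    using Suc.IH[of "\<lambda>j. g (Suc j)"] Suc.prems by fastforce
  obtain P where P: "pderiv P = p" and "degree P \<le> Suc (degree p)"
    by (rule poly_antiderivative_exists)
  have "((\<lambda>x. g 0 x - poly P x) has_real_derivative 0) (at x)" for x
    using Suc.prems(1)[of 0 x] poly_DERIV[of P x] p[of x] P
    by (auto intro!: derivative_eq_intros)
  then have const: "g 0 x - poly P x = g 0 0 - poly P 0" for x
    using DERIV_isconst_all by blast
  show ?case
  proof (intro exI[of _ "P + [:g 0 0 - poly P 0:]"] conjI allI)
    show "g 0 x = poly (P + [:g 0 0 - poly P 0:]) x" for x
      using const[of x] by simp
    have "degree (P + [:g 0 0 - poly P 0:]) \<le> degree P"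
      by (rule order.trans[OF degree_add_le_max]) auto
    then show "degree (P + [:g 0 0 - poly P 0:]) \<le> Suc K"
      using \<open>degree P \<le> Suc (degree p)\<close> \<open>degree p \<le> K\<close> by linarith
  qed
qed

lemma moments_vanish_imp_coeff_zero:
  fixes t c :: "nat \<Rightarrow> real"
  assumes inj: "inj_on t {..<n}" and moments: "\<And>k. k < n \<Longrightarrow> (\<Sum>i<n. c i * t i ^ k) = 0"
    and "i < n"
  shows "c i = 0"
proof -
  define Q where "Q = (\<Prod>j\<in>{..<n}-{i}. [:- t j, 1:])"
  have "degree Q \<le> sum (degree \<circ> (\<lambda>j. [:- t j, 1:])) ({..<n}-{i})"
    unfolding Q_def by (rule degree_prod_sum_le) auto
  also have "\<dots> = n - 1"
    using \<open>i < n\<close> by simp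
  finally have "degree Q < n"
    using \<open>i < n\<close> by linarith
  have "(\<Sum>j<n. c j * poly Q (t j)) = (\<Sum>j<n. c j * (\<Sum>k\<le>degree Q. coeff Q k * t j ^ k))"
    by (simp add: poly_altdef)
  also have "\<dots> = (\<Sum>k\<le>degree Q. coeff Q k * (\<Sum>j<n. c j * t j ^ k))"
    by (simp add: sum_distrib_left sum_distrib_right mult_ac) (rule sum.swap)
  also have "\<dots> = 0"
    using moments \<open>degree Q < n\<close> by (auto intro!: sum.neutral)
  finally have "(\<Sum>j<n. c j * poly Q (t j)) = 0" .
  moreover have "(\<Sum>j<n. c j * poly Q (t j)) = c i * poly Q (t i)"
    using \<open>i < n\<close> by (subst sum.remove[of _ i]) (auto simp: Q_def poly_prod intro!: sum.neutral prod_zero)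
  moreover have "poly Q (t i) \<noteq> 0"
    unfolding Q_def poly_prod using inj \<open>i < n\<close> by (auto simp: inj_on_def)
  ultimately show ?thesis
    by simp
qed

definition lagrange_basis :: "nat \<Rightarrow> nat \<Rightarrow> real poly" where
  "lagrange_basis d r = (\<Prod>s\<in>{..d}-{r}. smult (1 / (real r - real s)) [:- real s, 1:])"

lemma poly_lagrange_basis_node:
  "s \<le> d \<Longrightarrow> r \<le> d \<Longrightarrow> poly (lagrange_basis d r) (real s) = (if s = r then 1 else 0)"
  unfolding lagrange_basis_def poly_prod
  by (auto intro!: prod_zero prod.neutral simp: diff_divide_distrib[symmetric])

lemma degree_lagrange_basis:
  assumes "r \<le> d"
  shows "degree (lagrange_basis d r) \<le> d"
proof -
  have "degree (lagrange_basis d r)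
      \<le> sum (degree \<circ> (\<lambda>s. smult (1 / (real r - real s)) [:- real s, 1:])) ({..d}-{r})"
    unfolding lagrange_basis_def by (rule degree_prod_sum_le) auto
  also have "\<dots> \<le> (\<Sum>s\<in>{..d}-{r}. 1)"
    by (intro sum_mono) (auto simp: degree_smult_le)
  also have "\<dots> \<le> d"
    using \<open>r \<le> d\<close> by simp
  finally show ?thesis .
qed

lemma poly_eq_lagrange_interpolation:
  assumes "degree q \<le> d"
  shows "poly q x = (\<Sum>r\<le>d. poly q (real r) * poly (lagrange_basis d r) x)"
proof -
  define I where "I = (\<Sum>r\<le>d. smult (poly q (real r)) (lagrange_basis d r))"
  have "degree I \<le> d"
    unfolding I_def by (intro degree_sum_le) (auto intro: order.trans[OF degree_smult_le] degree_lagrange_basis)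
  have "q = I"
  proof (rule poly_eqI_degree[of "real ` {..d}"])
    fix x assume "x \<in> real ` {..d}"
    then obtain s where "s \<le> d" "x = real s"
      by auto
    then show "poly q x = poly I x"
      by (simp add: I_def poly_sum poly_lagrange_basis_node if_distrib cong: if_cong)
  qed (use assms \<open>degree I \<le> d\<close> in \<open>auto simp: card_image inj_on_def\<close>)
  then have "poly q x = poly I x"
    by simp
  then show ?thesis
    by (simp only: I_def poly_sum poly_smult)
qed

lemma uniform_limit_of_bounded_degree_polys_is_poly:
  fixes f :: "real \<Rightarrow> real"
  assumes approx: "\<And>\<epsilon>. \<epsilon> > 0 \<Longrightarrow> \<exists>q. degree q \<le> d \<and> (\<forall>x. \<bar>f x - poly q x\<bar> \<le> \<epsilon>)"
  shows "\<exists>p. \<forall>x. f x = poly p x"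
proof -
  define I where "I = (\<Sum>r\<le>d. smult (f (real r)) (lagrange_basis d r))"
  have "\<bar>f x - poly I x\<bar> \<le> 0 + \<epsilon>" if "\<epsilon> > 0" for x \<epsilon>
  proof -
    define S where "S = 1 + (\<Sum>r\<le>d. \<bar>poly (lagrange_basis d r) x\<bar>)"
    have "S > 0"
      unfolding S_def by (simp add: add_pos_nonneg sum_nonneg)
    then obtain q where "degree q \<le> d" and q: "\<And>y. \<bar>f y - poly q y\<bar> \<le> \<epsilon> / S"
      using approx[of "\<epsilon> / S"] \<open>\<epsilon> > 0\<close> by auto
    have "f x - poly I x = (f x - poly q x)
        - (\<Sum>r\<le>d. (f (real r) - poly q (real r)) * poly (lagrange_basis d r) x)"
      using poly_eq_lagrange_interpolation[OF \<open>degree q \<le> d\<close>, of x]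
      by (simp add: I_def poly_sum algebra_simps sum_subtractf)
    also have "\<bar>\<dots>\<bar> \<le> \<bar>f x - poly q x\<bar>
        + (\<Sum>r\<le>d. \<bar>f (real r) - poly q (real r)\<bar> * \<bar>poly (lagrange_basis d r) x\<bar>)"
      by (rule order.trans[OF abs_triangle_ineq4 add_left_mono[OF order.trans[OF sum_abs]]])
         (simp add: abs_mult)
    also have "\<dots> \<le> \<epsilon> / S + (\<Sum>r\<le>d. \<epsilon> / S * \<bar>poly (lagrange_basis d r) x\<bar>)"
      by (intro add_mono q sum_mono mult_right_mono) auto
    also have "\<dots> = \<epsilon> / S * S"
      unfolding S_def by (simp add: sum_distrib_left distrib_left)
    also have "\<dots> = \<epsilon>"
      using \<open>S > 0\<close> by simp
    finally show ?thesis
      by simp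
  qed
  then have "\<forall>x. f x = poly I x"
    using field_le_epsilon by (metis abs_le_zero_iff eq_iff_diff_eq_0)
  then show ?thesis ..
qed

lemma lipschitz_on_DERIV_abs_le:
  fixes f :: "real \<Rightarrow> real"
  assumes "L-lipschitz_on UNIV f" and "(f has_real_derivative D) (at x)"
  shows "\<bar>D\<bar> \<le> L"
proof -
  have "((\<lambda>h. \<bar>(f (x + h) - f x) / h\<bar>) \<longlongrightarrow> \<bar>D\<bar>) (at 0)"
    using assms(2) by (intro tendsto_rabs) (simp add: DERIV_def)
  moreover have "\<bar>(f (x + h) - f x) / h\<bar> \<le> L" if "h \<noteq> 0" for h
    using lipschitz_onD[OF assms(1), of "x + h" x] that
    by (simp add: dist_real_def divide_le_eq)
  ultimately show ?thesis
    by (intro tendsto_le[OF _ tendsto_const]) (auto simp: eventually_at_filter)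
qed

lemma lipschitz_poly_affine:
  fixes p :: "real poly"
  assumes lip: "L-lipschitz_on UNIV (poly p)"
  shows "\<exists>a c. \<forall>x. poly p x = a * x + c"
proof -
  have "degree p \<le> 1"
  proof (rule ccontr)
    assume "\<not> degree p \<le> 1"
    then have "degree (pderiv p) \<ge> 1"
      by (simp add: degree_pderiv)
    obtain a q where pq: "pderiv p = pCons a q"
      by (cases "pderiv p") auto
    with \<open>degree (pderiv p) \<ge> 1\<close> have "q \<noteq> 0"
      by auto
    obtain r where r: "\<And>z. r \<le> norm z \<Longrightarrow> L + 1 \<le> norm (poly (pCons a q) z)"
      using poly_infinity[OF \<open>q \<noteq> 0\<close>, of "L + 1" a] by blast
    have "L + 1 \<le> \<bar>poly (pderiv p) \<bar>r\<bar>\<bar>"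
      using r[of "\<bar>r\<bar>"] pq by simp
    moreover have "\<bar>poly (pderiv p) \<bar>r\<bar>\<bar> \<le> L"
      by (rule lipschitz_on_DERIV_abs_le[OF lip poly_DERIV])
    ultimately show False
      by simp
  qed
  then have "p = [:coeff p 0, coeff p 1:]"
    by (intro poly_eqI) (auto simp: coeff_pCons coeff_eq_0 split: nat.split)
  then obtain c0 c1 where "p = [:c0, c1:]"
    by blast
  then show ?thesis
    by (intro exI[of _ c1] exI[of _ c0]) (simp add: algebra_simps)
qed

lemma antiderivative_chain_exists:
  fixes \<sigma> :: "real \<Rightarrow> real"
  assumes "continuous_on UNIV \<sigma>"
  obtains A where "A 0 = \<sigma>" and "\<And>k x. (A (Suc k) has_real_derivative A k x) (at x)"
proof -
  have antiderivative: "\<exists>F. \<forall>x. (F has_real_derivative f x) (at x)" if "continuous_on UNIV f" for f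
  proof -
    have "\<exists>F. \<forall>x :: real. -\<infinity> < x \<longrightarrow> x < \<infinity> \<longrightarrow> (F has_vector_derivative f x) (at x)"
      by (rule einterval_antiderivative) (use that in \<open>auto simp: continuous_on_eq_continuous_at\<close>)
    then show ?thesis
      by (auto simp: has_real_derivative_iff_has_vector_derivative)
  qed
  define A where "A = rec_nat \<sigma> (\<lambda>_ g. SOME F. \<forall>x. (F has_real_derivative g x) (at x))"
  have "continuous_on UNIV (A k) \<and> (\<forall>x. (A (Suc k) has_real_derivative A k x) (at x))" for k
  proof (induction k)
    case 0
    then show ?case
      using assms someI_ex[OF antiderivative[OF assms]] by (simp add: A_def)
  next
    case (Suc k)
    then have "continuous_on UNIV (A (Suc k))"
      by (meson DERIV_isCont continuous_at_imp_continuous_on)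
    then show ?case
      using someI_ex[OF antiderivative] by (simp add: A_def)
  qed
  then show ?thesis
    using that[of A] by (simp add: A_def)
qed

lemma taylor_lipschitz_remainder:
  fixes A :: "nat \<Rightarrow> real \<Rightarrow> real"
  assumes A: "\<And>k x. (A (Suc k) has_real_derivative A k x) (at x)"
    and lip: "L-lipschitz_on UNIV (A 0)"
  shows "\<bar>A m (b + h) - (\<Sum>j\<le>m. A (m - j) b / fact j * h ^ j)\<bar> \<le> L * \<bar>h\<bar> ^ Suc m / fact m"
proof -
  have "\<exists>\<xi>. \<bar>\<xi>\<bar> \<le> \<bar>h\<bar> \<and> A m (b + h)
      = (\<Sum>j<m. A (m - j) (b + 0) / fact j * h ^ j) + A (m - m) (b + \<xi>) / fact m * h ^ m"
  proof (rule Maclaurin_bi_le[where diff = "\<lambda>j y. A (m - j) (b + y)"])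
    show "\<forall>j y. j < m \<and> \<bar>y\<bar> \<le> \<bar>h\<bar> \<longrightarrow>
        ((\<lambda>y. A (m - j) (b + y)) has_real_derivative A (m - Suc j) (b + y)) (at y)"
    proof (intro allI impI)
      fix j y assume "j < m \<and> \<bar>y\<bar> \<le> \<bar>h\<bar>"
      then have "m - j = Suc (m - Suc j)"
        by auto
      then show "((\<lambda>y. A (m - j) (b + y)) has_real_derivative A (m - Suc j) (b + y)) (at y)"
        using DERIV_shift[of "A (m - j)" "A (m - Suc j) (y + b)" y b] A by (simp add: add.commute)
    qed
  qed simp
  then obtain \<xi> where "\<bar>\<xi>\<bar> \<le> \<bar>h\<bar>"
    and taylor: "A m (b + h) = (\<Sum>j<m. A (m - j) b / fact j * h ^ j) + A 0 (b + \<xi>) / fact m * h ^ m"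
    by auto
  have "A m (b + h) - (\<Sum>j\<le>m. A (m - j) b / fact j * h ^ j) = (A 0 (b + \<xi>) - A 0 b) / fact m * h ^ m"
    by (simp add: taylor lessThan_Suc_atMost[symmetric] algebra_simps diff_divide_distrib)
  also have "\<bar>\<dots>\<bar> \<le> L * \<bar>h\<bar> / fact m * \<bar>h\<bar> ^ m"
  proof -
    have "\<bar>A 0 (b + \<xi>) - A 0 b\<bar> \<le> L * \<bar>h\<bar>"
      using lipschitz_onD[OF lip, of "b + \<xi>" b] \<open>\<bar>\<xi>\<bar> \<le> \<bar>h\<bar>\<close> lipschitz_on_nonneg[OF lip]
      by (simp add: dist_real_def) (meson mult_left_mono order.trans)
    then show ?thesis
      by (simp add: abs_mult power_abs divide_right_mono mult_right_mono)
  qed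
  finally show ?thesis
    by (simp add: mult_ac)
qed

lemma dilation_sum_taylor_bound:
  fixes A :: "nat \<Rightarrow> real \<Rightarrow> real" and c t :: "nat \<Rightarrow> real"
  assumes A: "\<And>k x. (A (Suc k) has_real_derivative A k x) (at x)"
    and lip: "L-lipschitz_on UNIV (A 0)"
    and moments: "\<And>j. j < m \<Longrightarrow> (\<Sum>i<n. c i * t i ^ j) = 0"
  shows "\<bar>(\<Sum>i<n. c i * A m (a * t i + b)) - a ^ m * (\<Sum>i<n. c i * t i ^ m) * A 0 b / fact m\<bar>
    \<le> L * (\<Sum>i<n. \<bar>c i\<bar> * \<bar>t i\<bar> ^ Suc m) * \<bar>a\<bar> ^ Suc m / fact m"
proof -
  define T where "T i = (\<Sum>j\<le>m. A (m - j) b / fact j * (a * t i) ^ j)" for i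
  have "(\<Sum>i<n. c i * T i) = (\<Sum>j\<le>m. A (m - j) b / fact j * a ^ j * (\<Sum>i<n. c i * t i ^ j))"
    unfolding T_def
    by (simp add: sum_distrib_left sum_distrib_right sum_divide_distrib power_mult_distrib mult_ac)
      (rule sum.swap)
  also have "\<dots> = a ^ m * (\<Sum>i<n. c i * t i ^ m) * A 0 b / fact m"
    by (simp add: moments lessThan_Suc_atMost[symmetric])
  finally have "(\<Sum>i<n. c i * A m (a * t i + b)) - a ^ m * (\<Sum>i<n. c i * t i ^ m) * A 0 b / fact m
      = (\<Sum>i<n. c i * (A m (b + a * t i) - T i))"
    by (simp add: algebra_simps sum_subtractf)
  also have "\<bar>\<dots>\<bar> \<le> (\<Sum>i<n. \<bar>c i\<bar> * (L * \<bar>a * t i\<bar> ^ Suc m / fact m))"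
  proof (rule order.trans[OF sum_abs sum_mono])
    fix i
    show "\<bar>c i * (A m (b + a * t i) - T i)\<bar> \<le> \<bar>c i\<bar> * (L * \<bar>a * t i\<bar> ^ Suc m / fact m)"
      unfolding T_def abs_mult[of "c i"]
      by (rule mult_left_mono[OF taylor_lipschitz_remainder[OF A lip] abs_ge_zero])
  qed
  also have "\<dots> = L * (\<Sum>i<n. \<bar>c i\<bar> * \<bar>t i\<bar> ^ Suc m) * \<bar>a\<bar> ^ Suc m / fact m"
    by (simp add: abs_mult power_mult_distrib sum_distrib_left sum_distrib_right sum_divide_distrib mult_ac)
  finally show ?thesis .
qed

lemma dilation_sum_of_antiderivative_is_poly:
  fixes A :: "nat \<Rightarrow> real \<Rightarrow> real" and c t :: "nat \<Rightarrow> real"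
  assumes A: "\<And>k x. (A (Suc k) has_real_derivative A k x) (at x)"
    and relation: "\<And>b. (\<Sum>i<n. c i * A 0 (a * t i + b)) = 0"
  shows "\<exists>P. (\<forall>b. (\<Sum>i<n. c i * A m (a * t i + b)) = poly P b) \<and> degree P \<le> m - 1"
proof (cases m)
  case 0
  then show ?thesis
    using relation by (intro exI[of _ 0]) simp
next
  case (Suc K)
  define g where "g j b = (\<Sum>i<n. c i * A (m - j) (a * t i + b))" for j b
  have "(g j has_real_derivative g (Suc j) x) (at x)" if "j \<le> K" for j x
  proof -
    have "m - j = Suc (m - Suc j)"
      using that Suc by simp
    then have "((\<lambda>b. A (m - j) (b + a * t i)) has_real_derivative A (m - Suc j) (x + a * t i)) (at x)" for i
      using DERIV_shift A by metis
    then show ?thesis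
      unfolding g_def by (auto intro!: DERIV_sum DERIV_cmult simp: add.commute)
  qed
  moreover have "g (Suc K) x = 0" for x
    using relation Suc by (simp add: g_def)
  ultimately show ?thesis
    using derivative_chain_vanishing_imp_poly[of K g] Suc by (simp add: g_def)
qed

lemma dilation_relation_uniform_poly_approx:
  fixes A :: "nat \<Rightarrow> real \<Rightarrow> real" and c t :: "nat \<Rightarrow> real"
  assumes A: "\<And>k x. (A (Suc k) has_real_derivative A k x) (at x)"
    and lip: "L-lipschitz_on UNIV (A 0)"
    and lower_moments: "\<And>j. j < m \<Longrightarrow> (\<Sum>i<n. c i * t i ^ j) = 0"
    and moment: "(\<Sum>i<n. c i * t i ^ m) \<noteq> 0"
    and relation: "\<And>a b. (\<Sum>i<n. c i * A 0 (a * t i + b)) = 0"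
    and "\<epsilon> > 0"
  shows "\<exists>q. degree q \<le> m - 1 \<and> (\<forall>x. \<bar>A 0 x - poly q x\<bar> \<le> \<epsilon>)"
proof -
  define M where "M = (\<Sum>i<n. c i * t i ^ m)"
  define S where "S = L * (\<Sum>i<n. \<bar>c i\<bar> * \<bar>t i\<bar> ^ Suc m)"
  define K where "K = S / \<bar>M\<bar>"
  define a where "a = \<epsilon> / (K + 1)"
  have "K \<ge> 0"
    unfolding K_def S_def using lipschitz_on_nonneg[OF lip] by (simp add: sum_nonneg)
  then have "a > 0" and "K * a \<le> \<epsilon>"
    using \<open>\<epsilon> > 0\<close> by (auto simp: a_def field_simps)
  obtain P where P: "\<And>b. (\<Sum>i<n. c i * A m (a * t i + b)) = poly P b" and "degree P \<le> m - 1"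
    using dilation_sum_of_antiderivative_is_poly[where m = m, OF A relation] by blast
  define q where "q = smult (fact m / (a ^ m * M)) P"
  have "\<bar>A 0 x - poly q x\<bar> \<le> \<epsilon>" for x
  proof -
    have taylor: "\<bar>poly P x - a ^ m * M * A 0 x / fact m\<bar> \<le> S * a ^ Suc m / fact m"
      using dilation_sum_taylor_bound[where A = A and n = n and c = c and t = t and m = m and a = a
          and b = x, OF A lip lower_moments] \<open>a > 0\<close>
      by (simp add: P M_def S_def)
    have "A 0 x - poly q x = (a ^ m * M * A 0 x / fact m - poly P x) * (fact m / (a ^ m * M))"
      using moment \<open>a > 0\<close> by (simp add: q_def M_def field_simps)
    then have "\<bar>A 0 x - poly q x\<bar> = \<bar>poly P x - a ^ m * M * A 0 x / fact m\<bar> * (fact m / (a ^ m * \<bar>M\<bar>))"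
      using \<open>a > 0\<close> by (simp add: abs_mult abs_minus_commute)
    also have "\<dots> \<le> S * a ^ Suc m / fact m * (fact m / (a ^ m * \<bar>M\<bar>))"
      using \<open>a > 0\<close> by (intro mult_right_mono taylor) simp
    also have "\<dots> = K * a"
      using \<open>a > 0\<close> by (simp add: K_def)
    finally show ?thesis
      using \<open>K * a \<le> \<epsilon>\<close> by simp
  qed
  moreover have "degree q \<le> m - 1"
    using \<open>degree P \<le> m - 1\<close> by (simp add: q_def)
  ultimately show ?thesis
    by blast
qed

lemma lipschitz_dilation_relation_imp_poly:
  fixes \<sigma> :: "real \<Rightarrow> real" and c t :: "nat \<Rightarrow> real"
  assumes lip: "L-lipschitz_on UNIV \<sigma>" and inj: "inj_on t {..<n}"
    and "i0 < n" and "c i0 \<noteq> 0"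
    and relation: "\<And>a b. (\<Sum>i<n. c i * \<sigma> (a * t i + b)) = 0"
  shows "\<exists>p. \<forall>x. \<sigma> x = poly p x"
proof -
  define M where "M k = (\<Sum>i<n. c i * t i ^ k)" for k
  have "\<exists>k. M k \<noteq> 0"
  proof (rule ccontr)
    assume "\<nexists>k. M k \<noteq> 0"
    then have "c i0 = 0"
      using moments_vanish_imp_coeff_zero[OF inj _ \<open>i0 < n\<close>] by (simp add: M_def)
    with \<open>c i0 \<noteq> 0\<close> show False ..
  qed
  define m where "m = (LEAST k. M k \<noteq> 0)"
  have "M m \<noteq> 0"
    unfolding m_def using \<open>\<exists>k. M k \<noteq> 0\<close> by (rule LeastI_ex)
  have "M j = 0" if "j < m" for j
    using that not_less_Least unfolding m_def by blast
  obtain A where "A 0 = \<sigma>" and A: "\<And>k x. (A (Suc k) has_real_derivative A k x) (at x)"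
    using antiderivative_chain_exists[OF lipschitz_on_continuous_on[OF lip]] by blast
  have "\<exists>q. degree q \<le> m - 1 \<and> (\<forall>x. \<bar>A 0 x - poly q x\<bar> \<le> \<epsilon>)" if "\<epsilon> > 0" for \<epsilon>
    using dilation_relation_uniform_poly_approx[where A = A and m = m and n = n and c = c and t = t, OF A] lip relation \<open>A 0 = \<sigma>\<close>
      \<open>M m \<noteq> 0\<close> \<open>\<And>j. j < m \<Longrightarrow> M j = 0\<close> that
    by (simp add: M_def)
  then show ?thesis
    using \<open>A 0 = \<sigma>\<close> uniform_limit_of_bounded_degree_polys_is_poly by metis
qed

lemma lipschitz_dilation_relation_imp_affine:
  fixes \<sigma> :: "real \<Rightarrow> real" and c t :: "nat \<Rightarrow> real"
  assumes lip: "L-lipschitz_on UNIV \<sigma>" and "inj_on t {..<n}"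
    and "i0 < n" and "c i0 \<noteq> 0"
    and "\<And>a b. (\<Sum>i<n. c i * \<sigma> (a * t i + b)) = 0"
  shows "\<exists>a c. \<forall>s. \<sigma> s = a * s + c"
proof -
  obtain p where p: "\<forall>x. \<sigma> x = poly p x"
    using lipschitz_dilation_relation_imp_poly[OF assms] by blast
  then have "\<sigma> = poly p"
    by auto
  with lip show ?thesis
    using lipschitz_poly_affine p by metis
qed

section \<open>Interpolation by ridge functions\<close>

inductive_set ridge_span :: "(real \<Rightarrow> real) \<Rightarrow> (real \<Rightarrow> real) set" for \<sigma> where
  zero: "(\<lambda>s. 0) \<in> ridge_span \<sigma>"
| add_ridge: "h \<in> ridge_span \<sigma> \<Longrightarrow> (\<lambda>s. h s + c * \<sigma> (a * s + b)) \<in> ridge_span \<sigma>"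

lemma ridge_in_ridge_span: "(\<lambda>s. \<sigma> (a * s + b)) \<in> ridge_span \<sigma>"
  using ridge_span.add_ridge[OF ridge_span.zero, of 1 \<sigma> a b] by simp

lemma ridge_span_add:
  assumes "h \<in> ridge_span \<sigma>" and "g \<in> ridge_span \<sigma>"
  shows "(\<lambda>s. h s + g s) \<in> ridge_span \<sigma>"
  using assms(2)
proof (induction g rule: ridge_span.induct)
  case zero
  then show ?case
    using assms(1) by simp
next
  case (add_ridge g c a b)
  have "(\<lambda>s. (h s + g s) + c * \<sigma> (a * s + b)) \<in> ridge_span \<sigma>"
    using add_ridge.IH by (rule ridge_span.add_ridge)
  then show ?case
    by (simp add: add.assoc)
qed

lemma ridge_span_scale:
  assumes "h \<in> ridge_span \<sigma>"
  shows "(\<lambda>s. k * h s) \<in> ridge_span \<sigma>"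
  using assms
proof (induction h rule: ridge_span.induct)
  case zero
  then show ?case
    by (simp add: ridge_span.zero)
next
  case (add_ridge h c a b)
  have "(\<lambda>s. k * h s + (k * c) * \<sigma> (a * s + b)) \<in> ridge_span \<sigma>"
    using add_ridge.IH by (rule ridge_span.add_ridge)
  then show ?case
    by (simp add: algebra_simps)
qed

lemma ridge_span_diff:
  "h \<in> ridge_span \<sigma> \<Longrightarrow> g \<in> ridge_span \<sigma> \<Longrightarrow> (\<lambda>s. h s - g s) \<in> ridge_span \<sigma>"
  using ridge_span_add[of h \<sigma> "\<lambda>s. (-1) * g s"] ridge_span_scale[of g \<sigma> "-1"] by simp

lemma ridge_span_sum:
  "finite I \<Longrightarrow> (\<And>i. i \<in> I \<Longrightarrow> f i \<in> ridge_span \<sigma>) \<Longrightarrow> (\<lambda>s. \<Sum>i\<in>I. f i s) \<in> ridge_span \<sigma>"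
proof (induction I rule: finite_induct)
  case empty
  then show ?case
    by (simp add: ridge_span.zero)
next
  case (insert i I)
  then have "(\<lambda>s. f i s + (\<Sum>i\<in>I. f i s)) \<in> ridge_span \<sigma>"
    by (intro ridge_span_add) auto
  then show ?case
    using insert by simp
qed

lemma ridge_span_separates_new_node:
  fixes \<sigma> :: "real \<Rightarrow> real" and t :: "nat \<Rightarrow> real"
  assumes lip: "L-lipschitz_on UNIV \<sigma>" and nonaffine: "\<not> (\<exists>a c. \<forall>s. \<sigma> s = a * s + c)"
    and inj: "inj_on t {..<Suc n}"
    and e: "\<And>i. i < n \<Longrightarrow> e i \<in> ridge_span \<sigma>"
    and delta: "\<And>i j. i < n \<Longrightarrow> j < n \<Longrightarrow> e i (t j) = (if i = j then 1 else 0)"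
  shows "\<exists>r\<in>ridge_span \<sigma>. (\<forall>j<n. r (t j) = 0) \<and> r (t n) = 1"
proof -
  define residual where "residual g s = g s - (\<Sum>j<n. g (t j) * e j s)" for g s
  have residual_nodes: "residual g (t j) = 0" if "j < n" for g j
    using that by (simp add: residual_def delta if_distrib cong: if_cong)
  have "\<exists>g\<in>ridge_span \<sigma>. residual g (t n) \<noteq> 0"
  proof (rule ccontr)
    assume no_residual: "\<not> ?thesis"
    define c where "c i = (if i = n then -1 else e i (t n))" for i
    have "(\<Sum>i<Suc n. c i * \<sigma> (a * t i + b)) = - residual (\<lambda>s. \<sigma> (a * s + b)) (t n)" for a b
      by (simp add: c_def residual_def mult.commute)
    then have "\<And>a b. (\<Sum>i<Suc n. c i * \<sigma> (a * t i + b)) = 0"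
      using no_residual ridge_in_ridge_span by fastforce
    then show False
      using lipschitz_dilation_relation_imp_affine[OF lip inj, of n c] nonaffine by (simp add: c_def)
  qed
  then obtain g where "g \<in> ridge_span \<sigma>" and "residual g (t n) \<noteq> 0"
    by blast
  have "residual g \<in> ridge_span \<sigma>"
    unfolding residual_def using \<open>g \<in> ridge_span \<sigma>\<close> e
    by (intro ridge_span_diff ridge_span_sum ridge_span_scale) auto
  then have "(\<lambda>s. 1 / residual g (t n) * residual g s) \<in> ridge_span \<sigma>"
    by (rule ridge_span_scale)
  then show ?thesis
    using residual_nodes \<open>residual g (t n) \<noteq> 0\<close> by (intro bexI) auto
qed

lemma ridge_span_delta_functions:
  fixes \<sigma> :: "real \<Rightarrow> real" and t :: "nat \<Rightarrow> real"
  assumes lip: "L-lipschitz_on UNIV \<sigma>" and nonaffine: "\<not> (\<exists>a c. \<forall>s. \<sigma> s = a * s + c)"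
    and "inj_on t {..<n}"
  shows "\<exists>e. (\<forall>i<n. e i \<in> ridge_span \<sigma>) \<and> (\<forall>i<n. \<forall>j<n. e i (t j) = (if i = j then 1 else 0))"
  using \<open>inj_on t {..<n}\<close>
proof (induction n)
  case 0
  then show ?case
    by simp
next
  case (Suc n)
  from Suc.prems have "inj_on t {..<n}"
    by (rule inj_on_subset) auto
  with Suc.IH obtain e where e: "\<And>i. i < n \<Longrightarrow> e i \<in> ridge_span \<sigma>"
    and delta: "\<And>i j. i < n \<Longrightarrow> j < n \<Longrightarrow> e i (t j) = (if i = j then 1 else 0)"
    by blast
  obtain r where "r \<in> ridge_span \<sigma>" and r: "\<forall>j<n. r (t j) = 0" "r (t n) = 1"
    using ridge_span_separates_new_node[OF lip nonaffine Suc.prems e delta] by blast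
  define e' where "e' i = (if i = n then r else (\<lambda>s. e i s - e i (t n) * r s))" for i
  show ?case
  proof (intro exI[of _ e'] conjI allI impI)
    fix i assume "i < Suc n"
    then show "e' i \<in> ridge_span \<sigma>"
      using \<open>r \<in> ridge_span \<sigma>\<close> e by (auto simp: e'_def intro!: ridge_span_diff ridge_span_scale)
  next
    fix i j assume "i < Suc n" "j < Suc n"
    then show "e' i (t j) = (if i = j then 1 else 0)"
      using delta r by (auto simp: e'_def less_Suc_eq)
  qed
qed

lemma ridge_span_interpolates:
  fixes \<sigma> :: "real \<Rightarrow> real"
  assumes "L-lipschitz_on UNIV \<sigma>" and "\<not> (\<exists>a c. \<forall>s. \<sigma> s = a * s + c)" and "finite T"
  shows "\<exists>h\<in>ridge_span \<sigma>. \<forall>x\<in>T. h x = v x"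
proof -
  obtain t where t: "bij_betw t {..<card T} T"
    using ex_bij_betw_nat_finite[OF \<open>finite T\<close>] unfolding atLeast0LessThan by blast
  obtain e where e: "\<forall>i<card T. e i \<in> ridge_span \<sigma>"
    and delta: "\<forall>i<card T. \<forall>j<card T. e i (t j) = (if i = j then 1 else 0)"
    using ridge_span_delta_functions[OF assms(1,2) bij_betw_imp_inj_on[OF t]] by blast
  define h where "h s = (\<Sum>i<card T. v (t i) * e i s)" for s
  show ?thesis
  proof
    show "h \<in> ridge_span \<sigma>"
      unfolding h_def using e by (intro ridge_span_sum ridge_span_scale) auto
    show "\<forall>x\<in>T. h x = v x"
    proof
      fix x assume "x \<in> T"
      then obtain j where "j < card T" and "x = t j"
        using t by (auto simp: bij_betw_def)
      have "h (t j) = (\<Sum>i<card T. v (t i) * (if i = j then 1 else 0))"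
        unfolding h_def using delta \<open>j < card T\<close> by (intro sum.cong) auto
      also have "\<dots> = v (t j)"
        using \<open>j < card T\<close> by (simp add: if_distrib cong: if_cong)
      finally show "h x = v x"
        using \<open>x = t j\<close> by simp
    qed
  qed
qed

section \<open>Shears generated by the control family\<close>

lemma flow_shear_field:
  fixes a :: "real^'d" and \<phi> :: "real \<Rightarrow> real"
  assumes "a $ l = 0" and "0 \<le> t"
  shows "flow (\<lambda>x. axis l (\<phi> (a \<bullet> x))) t x = x + t *\<^sub>R axis l (\<phi> (a \<bullet> x))"
proof -
  define v where "v = axis l (\<phi> (a \<bullet> x))"
  have a_axis: "a \<bullet> axis l c = 0" for c
    using assms(1) by (simp add: inner_axis)
  have "(THE y. \<exists>u. u 0 = x \<and> u t = y \<and>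
      (\<forall>s\<in>{0..t}. (u has_vector_derivative axis l (\<phi> (a \<bullet> u s))) (at s within {0..t}))) = x + t *\<^sub>R v"
  proof (rule the_equality)
    show "\<exists>u. u 0 = x \<and> u t = x + t *\<^sub>R v \<and>
        (\<forall>s\<in>{0..t}. (u has_vector_derivative axis l (\<phi> (a \<bullet> u s))) (at s within {0..t}))"
      by (intro exI[of _ "\<lambda>s. x + s *\<^sub>R v"])
         (auto simp: v_def inner_add_right a_axis intro!: derivative_eq_intros)
  next
    fix y assume "\<exists>u. u 0 = x \<and> u t = y \<and>
        (\<forall>s\<in>{0..t}. (u has_vector_derivative axis l (\<phi> (a \<bullet> u s))) (at s within {0..t}))"
    then obtain u where "u 0 = x" and "u t = y"
      and u': "\<And>s. s \<in> {0..t} \<Longrightarrow> (u has_vector_derivative axis l (\<phi> (a \<bullet> u s))) (at s within {0..t})"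
      by blast
    have "0 \<in> {0..t}" and "t \<in> {0..t}"
      using \<open>0 \<le> t\<close> by auto
    obtain c where "\<And>s. s \<in> {0..t} \<Longrightarrow> a \<bullet> u s = c"
    proof (rule has_vector_derivative_zero_constant)
      show "((\<lambda>s. a \<bullet> u s) has_vector_derivative 0) (at s within {0..t})" if "s \<in> {0..t}" for s
        using bounded_linear.has_vector_derivative[OF bounded_linear_inner_right[of a] u'[OF that]]
        by (simp add: a_axis)
    qed auto
    then have "a \<bullet> u s = a \<bullet> x" if "s \<in> {0..t}" for s
      using that \<open>0 \<in> {0..t}\<close> \<open>u 0 = x\<close> by metis
    then have "((\<lambda>s. u s - s *\<^sub>R v) has_vector_derivative 0) (at s within {0..t})" if "s \<in> {0..t}" for s
      using u'[OF that] that by (auto simp: v_def intro!: derivative_eq_intros)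
    then obtain c' where "\<And>s. s \<in> {0..t} \<Longrightarrow> u s - s *\<^sub>R v = c'"
      using has_vector_derivative_zero_constant[of "{0..t}" "\<lambda>s. u s - s *\<^sub>R v"] by auto
    then have "u t - t *\<^sub>R v = u 0 - 0 *\<^sub>R v"
      using \<open>0 \<in> {0..t}\<close> \<open>t \<in> {0..t}\<close> by metis
    then show "y = x + t *\<^sub>R v"
      using \<open>u 0 = x\<close> \<open>u t = y\<close> by (simp add: algebra_simps)
  qed
  then show ?thesis
    by (simp add: flow_def v_def)
qed

lemma flow_compositions_comp:
  assumes "\<psi> \<in> flow_compositions F" and "\<phi> \<in> flow_compositions F"
  shows "\<psi> \<circ> \<phi> \<in> flow_compositions F"
  using assms(1)
proof (induction \<psi> rule: flow_compositions.induct)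
  case id_in
  then show ?case
    using assms(2) by simp
next
  case (comp_in \<psi> f t)
  then have "flow f t \<circ> (\<psi> \<circ> \<phi>) \<in> flow_compositions F"
    by (intro flow_compositions.comp_in)
  then show ?case
    by (simp only: comp_assoc)
qed

lemma flow_in_flow_compositions: "f \<in> F \<Longrightarrow> 0 \<le> t \<Longrightarrow> flow f t \<in> flow_compositions F"
  using flow_compositions.comp_in[OF flow_compositions.id_in, of f F t] by simp

lemma shear_field_in_control_family:
  fixes \<A> :: "(real^'d^'d) set"
  assumes rows: "\<forall>l. {A $ l | A. A \<in> \<A>} = UNIV"
  shows "(\<lambda>x. axis l (k * \<sigma> (a \<bullet> x + b))) \<in> control_family \<sigma> \<A>"
proof -
  have "a \<in> {A $ l | A. A \<in> \<A>}"
    using rows by blast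
  then obtain A where "A \<in> \<A>" and "A $ l = a"
    by blast
  define W :: "real^'d^'d" where "W = (\<chi> i j. if i = l \<and> j = l then k else 0)"
  have "is_diagonal W"
    by (simp add: is_diagonal_def W_def)
  have "(W *v w) $ i = axis l (k * w $ l) $ i" for w i
  proof -
    have "(W *v w) $ i = (\<Sum>j\<in>UNIV. (if i = l \<and> j = l then k else 0) * w $ j)"
      by (simp add: W_def matrix_vector_mult_def)
    also have "\<dots> = (\<Sum>j\<in>UNIV. if j = l then (if i = l then k * w $ l else 0) else 0)"
      by (rule sum.cong) auto
    finally show ?thesis
      by (simp add: axis_def)
  qed
  then have "W *v w = axis l (k * w $ l)" for w
    by (simp add: vec_eq_iff)
  then have "(\<lambda>x. axis l (k * \<sigma> (a \<bullet> x + b))) = (\<lambda>x. W *v elementwise \<sigma> (A *v x + (\<chi> i. b)))"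
    using \<open>A $ l = a\<close> by (simp add: elementwise_def matrix_vector_mul_component)
  then show ?thesis
    unfolding control_family_def using \<open>is_diagonal W\<close> \<open>A \<in> \<A>\<close> by blast
qed

lemma ridge_shear_in_flow_compositions:
  fixes \<A> :: "(real^'d^'d) set" and a :: "real^'d"
  assumes rows: "\<forall>l. {A $ l | A. A \<in> \<A>} = UNIV" and "a $ l = 0"
    and "h \<in> ridge_span \<sigma>"
  shows "(\<lambda>x. x + axis l (h (a \<bullet> x))) \<in> flow_compositions (control_family \<sigma> \<A>)"
  using \<open>h \<in> ridge_span \<sigma>\<close>
proof (induction h rule: ridge_span.induct)
  case zero
  have "(\<lambda>x::real^'d. x + axis l 0) = id"
    by (simp add: fun_eq_iff vec_eq_iff axis_def)
  then show ?case
    by (simp add: flow_compositions.id_in)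
next
  case (add_ridge h c r \<beta>)
  have "(\<lambda>x. axis l (c * \<sigma> ((r *\<^sub>R a) \<bullet> x + \<beta>))) \<in> control_family \<sigma> \<A>"
    by (rule shear_field_in_control_family[OF rows])
  then have "flow (\<lambda>x. axis l (c * \<sigma> ((r *\<^sub>R a) \<bullet> x + \<beta>))) 1 \<in> flow_compositions (control_family \<sigma> \<A>)"
    by (rule flow_in_flow_compositions) simp
  moreover have "flow (\<lambda>x. axis l (c * \<sigma> ((r *\<^sub>R a) \<bullet> x + \<beta>))) 1
      = (\<lambda>x. x + axis l (c * \<sigma> ((r *\<^sub>R a) \<bullet> x + \<beta>)))"
    using flow_shear_field[of "r *\<^sub>R a" l 1 "\<lambda>s. c * \<sigma> (s + \<beta>)"] \<open>a $ l = 0\<close> by (simp add: fun_eq_iff)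
  ultimately have "(\<lambda>x. x + axis l (c * \<sigma> ((r *\<^sub>R a) \<bullet> x + \<beta>))) \<circ> (\<lambda>x. x + axis l (h (a \<bullet> x)))
      \<in> flow_compositions (control_family \<sigma> \<A>)"
    using add_ridge.IH by (simp add: flow_compositions_comp)
  moreover have "(\<lambda>x. x + axis l (c * \<sigma> ((r *\<^sub>R a) \<bullet> x + \<beta>))) \<circ> (\<lambda>x. x + axis l (h (a \<bullet> x)))
      = (\<lambda>x. x + axis l (h (a \<bullet> x) + c * \<sigma> (r * (a \<bullet> x) + \<beta>)))"
  proof -
    have axis_add: "axis l (p + q) = axis l p + axis l q" for p q :: real
      by (simp add: vec_eq_iff axis_def)
    have "a \<bullet> (x + axis l u) = a \<bullet> x" for x u
      using \<open>a $ l = 0\<close> by (simp add: inner_add_right inner_axis)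
    then show ?thesis
      by (simp add: fun_eq_iff axis_add add.assoc)
  qed
  ultimately show ?case
    by simp
qed

section \<open>Exact transport of point configurations\<close>

definition reachable :: "(real^'d \<Rightarrow> real^'d) set \<Rightarrow> nat \<Rightarrow> (nat \<Rightarrow> real^'d) \<Rightarrow> (nat \<Rightarrow> real^'d) \<Rightarrow> bool"
  where "reachable F N x y \<longleftrightarrow> (\<exists>\<phi>\<in>flow_compositions F. \<forall>i<N. \<phi> (x i) = y i)"

definition mutually_reachable ::
    "(real^'d \<Rightarrow> real^'d) set \<Rightarrow> nat \<Rightarrow> (nat \<Rightarrow> real^'d) \<Rightarrow> (nat \<Rightarrow> real^'d) \<Rightarrow> bool"
  where "mutually_reachable F N x y \<longleftrightarrow> reachable F N x y \<and> reachable F N y x"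

lemma reachable_trans: "reachable F N x y \<Longrightarrow> reachable F N y z \<Longrightarrow> reachable F N x z"
  unfolding reachable_def by (metis comp_apply flow_compositions_comp)

lemma mutually_reachable_refl: "mutually_reachable F N x x"
  unfolding mutually_reachable_def reachable_def using flow_compositions.id_in[of F]
  by (auto intro!: bexI[of _ id])

lemma mutually_reachable_sym: "mutually_reachable F N x y \<Longrightarrow> mutually_reachable F N y x"
  unfolding mutually_reachable_def by blast

lemma mutually_reachable_trans:
  "mutually_reachable F N x y \<Longrightarrow> mutually_reachable F N y z \<Longrightarrow> mutually_reachable F N x z"
  unfolding mutually_reachable_def using reachable_trans by blast

lemma mutually_reachable_cong:
  "mutually_reachable F N x y \<Longrightarrow> (\<And>i. i < N \<Longrightarrow> y i = y' i) \<Longrightarrow> mutually_reachable F N x y'"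
  unfolding mutually_reachable_def reachable_def by auto

lemma reachable_shear:
  fixes \<A> :: "(real^'d^'d) set" and a :: "real^'d"
  assumes rows: "\<forall>l. {A $ l | A. A \<in> \<A>} = UNIV"
    and lip: "L-lipschitz_on UNIV \<sigma>" and nonaffine: "\<not> (\<exists>a c. \<forall>s. \<sigma> s = a * s + c)"
    and "a $ l = 0"
  shows "reachable (control_family \<sigma> \<A>) N x (\<lambda>i. x i + axis l (D (a \<bullet> x i)))"
proof -
  obtain h where "h \<in> ridge_span \<sigma>" and "\<forall>s\<in>(\<lambda>i. a \<bullet> x i) ` {..<N}. h s = D s"
    using ridge_span_interpolates[OF lip nonaffine] by blast
  then show ?thesis
    unfolding reachable_def using ridge_shear_in_flow_compositions[OF rows \<open>a $ l = 0\<close>]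
    by (intro bexI[of _ "\<lambda>x. x + axis l (h (a \<bullet> x))"]) auto
qed

lemma mutually_reachable_shear:
  fixes \<A> :: "(real^'d^'d) set" and a :: "real^'d"
  assumes rows: "\<forall>l. {A $ l | A. A \<in> \<A>} = UNIV"
    and lip: "L-lipschitz_on UNIV \<sigma>" and nonaffine: "\<not> (\<exists>a c. \<forall>s. \<sigma> s = a * s + c)"
    and "a $ l = 0"
  shows "mutually_reachable (control_family \<sigma> \<A>) N x (\<lambda>i. x i + axis l (D (a \<bullet> x i)))"
proof -
  define y where "y = (\<lambda>i. x i + axis l (D (a \<bullet> x i)))"
  have "a \<bullet> y i = a \<bullet> x i" for i
    using \<open>a $ l = 0\<close> by (simp add: y_def inner_add_right inner_axis)
  then have "(\<lambda>i. y i + axis l (- D (a \<bullet> y i))) = x"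
    by (simp add: fun_eq_iff vec_eq_iff y_def axis_def)
  then have "reachable (control_family \<sigma> \<A>) N y x"
    using reachable_shear[OF rows lip nonaffine \<open>a $ l = 0\<close>, of N y "\<lambda>s. - D s"] by simp
  moreover have "reachable (control_family \<sigma> \<A>) N x y"
    unfolding y_def by (rule reachable_shear[OF rows lip nonaffine \<open>a $ l = 0\<close>])
  ultimately show ?thesis
    by (simp add: mutually_reachable_def y_def)
qed

lemma mutually_reachable_update_coordinates:
  fixes \<A> :: "(real^'d^'d) set" and w :: "nat \<Rightarrow> real^'d"
  assumes rows: "\<forall>l. {A $ l | A. A \<in> \<A>} = UNIV"
    and lip: "L-lipschitz_on UNIV \<sigma>" and nonaffine: "\<not> (\<exists>a c. \<forall>s. \<sigma> s = a * s + c)"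
    and inj: "inj_on (\<lambda>i. w i $ p) {..<N}" and "finite K" and "p \<notin> K"
  shows "mutually_reachable (control_family \<sigma> \<A>) N w (\<lambda>i. \<chi> k. if k \<in> K then f i k else w i $ k)"
  using \<open>finite K\<close> \<open>p \<notin> K\<close>
proof (induction K rule: finite_induct)
  case empty
  show ?case
    by (rule mutually_reachable_cong[OF mutually_reachable_refl]) (simp add: vec_eq_iff)
next
  case (insert k K)
  define w' where "w' = (\<lambda>i. \<chi> j. if j \<in> K then f i j else w i $ j)"
  \<comment> \<open>coordinate p identifies the point, so a shear along axis k driven by coordinate p
    can prescribe coordinate k freely\<close>
  define index where "index = the_inv_into {..<N} (\<lambda>i. w i $ p)"
  have index: "index (w i $ p) = i" if "i < N" for i
    using the_inv_into_f_f[OF inj] that by (simp add: index_def)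
  have "k \<noteq> p"
    using insert.prems by auto
  then have "axis p (1::real) $ k = 0"
    by (simp add: axis_def)
  then have "mutually_reachable (control_family \<sigma> \<A>) N w'
      (\<lambda>i. w' i + axis k ((\<lambda>s. f (index s) k - w' (index s) $ k) (axis p 1 \<bullet> w' i)))"
    by (rule mutually_reachable_shear[OF rows lip nonaffine])
  moreover have "w' i + axis k (f (index (axis p 1 \<bullet> w' i)) k - w' (index (axis p 1 \<bullet> w' i)) $ k)
      = (\<chi> j. if j \<in> insert k K then f i j else w i $ j)" if "i < N" for i
  proof -
    have coordinate_p: "axis p 1 \<bullet> w' i = w i $ p"
      using insert.prems by (simp add: inner_axis' w'_def)
    show ?thesis
      unfolding coordinate_p index[OF that] using \<open>k \<notin> K\<close> by (simp add: vec_eq_iff axis_def w'_def)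
  qed
  ultimately have "mutually_reachable (control_family \<sigma> \<A>) N w'
      (\<lambda>i. \<chi> j. if j \<in> insert k K then f i j else w i $ j)"
    by (rule mutually_reachable_cong) simp
  moreover have "mutually_reachable (control_family \<sigma> \<A>) N w w'"
    unfolding w'_def using insert by simp
  ultimately show ?case
    using mutually_reachable_trans by blast
qed

lemma exists_functional_nonvanishing:
  fixes V :: "(real^'d) set"
  assumes "finite V" and "0 \<notin> V"
  shows "\<exists>a. a $ q = 0 \<and> (\<forall>v\<in>V. v $ q + a \<bullet> v \<noteq> 0)"
proof -
  obtain enc :: "'d \<Rightarrow> nat" where "inj enc"
    using finite_imp_inj_to_nat_seg[of "UNIV :: 'd set"] by auto
  define e where "e k = (if k = q then 0 else Suc (enc k))" for k
  have "inj e"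
    using \<open>inj enc\<close> by (auto simp: inj_def e_def)
  \<comment> \<open>a is taken on the moment curve, along which each condition fails only at the
    roots of a nonzero polynomial\<close>
  define P where "P v = (\<Sum>k\<in>UNIV. monom (v $ k) (e k))" for v :: "real^'d"
  define a where "a \<mu> = (\<chi> k. if k = q then 0 else \<mu> ^ e k)" for \<mu> :: real
  have "v $ q + a \<mu> \<bullet> v = poly (P v) \<mu>" for \<mu> v
  proof -
    have "poly (P v) \<mu> = v $ q + (\<Sum>k\<in>UNIV - {q}. v $ k * \<mu> ^ e k)"
      by (simp add: P_def poly_sum poly_monom sum.remove[of UNIV q] e_def mult.commute)
    also have "\<dots> = v $ q + a \<mu> \<bullet> v"
      by (simp add: a_def inner_vec_def sum.remove[of UNIV q] mult.commute)
    finally show ?thesis ..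
  qed
  moreover have "P v \<noteq> 0" if "v \<in> V" for v
  proof -
    obtain k where "v $ k \<noteq> 0"
      using \<open>0 \<notin> V\<close> \<open>v \<in> V\<close> by (metis vec_eq_iff zero_index)
    moreover have "coeff (P v) (e k) = v $ k"
      using \<open>inj e\<close> by (simp add: P_def coeff_sum inj_eq)
    ultimately show ?thesis
      by auto
  qed
  then have "finite (\<Union>v\<in>V. {\<mu>. poly (P v) \<mu> = 0})"
    using \<open>finite V\<close> by (intro finite_UN_I) (auto intro: poly_roots_finite)
  then obtain \<mu> where "\<mu> \<notin> (\<Union>v\<in>V. {\<mu>. poly (P v) \<mu> = 0})"
    using ex_new_if_finite[OF infinite_UNIV_char_0] by blast
  ultimately show ?thesis
    by (intro exI[of _ "a \<mu>"]) (auto simp: a_def)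
qed

lemma exists_shear_injective_coordinate:
  fixes x :: "nat \<Rightarrow> real^'d"
  assumes "inj_on x {..<N}"
  shows "\<exists>a. a $ q = 0 \<and> inj_on (\<lambda>i. x i $ q + a \<bullet> x i) {..<N}"
proof -
  define V where "V = {x i - x j | i j. i < N \<and> j < N \<and> i \<noteq> j}"
  have "V \<subseteq> (\<lambda>(i, j). x i - x j) ` ({..<N} \<times> {..<N})"
    unfolding V_def by auto
  then have "finite V"
    by (rule finite_subset) auto
  have "0 \<notin> V"
    using assms unfolding V_def inj_on_def by auto
  obtain a where "a $ q = 0" and a: "\<forall>v\<in>V. v $ q + a \<bullet> v \<noteq> 0"
    using exists_functional_nonvanishing[OF \<open>finite V\<close> \<open>0 \<notin> V\<close>] by blast
  have "inj_on (\<lambda>i. x i $ q + a \<bullet> x i) {..<N}"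
  proof (rule inj_onI, rule ccontr)
    fix i j assume "i \<in> {..<N}" "j \<in> {..<N}" "i \<noteq> j"
      and eq: "x i $ q + a \<bullet> x i = x j $ q + a \<bullet> x j"
    then have "x i - x j \<in> V"
      unfolding V_def by blast
    moreover have "(x i - x j) $ q + a \<bullet> (x i - x j) = 0"
      using eq by (simp add: inner_diff_right)
    ultimately show False
      using a by blast
  qed
  with \<open>a $ q = 0\<close> show ?thesis
    by blast
qed

lemma mutually_reachable_standard_configuration:
  fixes \<A> :: "(real^'d^'d) set" and x :: "nat \<Rightarrow> real^'d"
  assumes rows: "\<forall>l. {A $ l | A. A \<in> \<A>} = UNIV"
    and lip: "L-lipschitz_on UNIV \<sigma>" and nonaffine: "\<not> (\<exists>a c. \<forall>s. \<sigma> s = a * s + c)"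
    and "p \<noteq> q" and "inj_on x {..<N}"
  shows "mutually_reachable (control_family \<sigma> \<A>) N x (\<lambda>i. axis p (real i))"
proof -
  let ?F = "control_family \<sigma> \<A>"
  obtain a where "a $ q = 0" and inj_q: "inj_on (\<lambda>i. x i $ q + a \<bullet> x i) {..<N}"
    using exists_shear_injective_coordinate[OF \<open>inj_on x {..<N}\<close>] by blast
  define x1 where "x1 = (\<lambda>i. x i + axis q (a \<bullet> x i))"
  define x2 where "x2 = (\<lambda>i. \<chi> k. if k \<in> {p} then real i else x1 i $ k)"
  have "mutually_reachable ?F N x x1"
    unfolding x1_def using mutually_reachable_shear[OF rows lip nonaffine \<open>a $ q = 0\<close>, of N x id] by simp
  moreover have "mutually_reachable ?F N x1 x2"
    unfolding x2_def using inj_q \<open>p \<noteq> q\<close>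
    by (intro mutually_reachable_update_coordinates[OF rows lip nonaffine]) (auto simp: x1_def)
  moreover have "mutually_reachable ?F N x2 (\<lambda>i. \<chi> k. if k \<in> - {p} then 0 else x2 i $ k)"
    by (intro mutually_reachable_update_coordinates[OF rows lip nonaffine]) (auto simp: x2_def inj_on_def)
  moreover have "(\<chi> k. if k \<in> - {p} then 0 else x2 i $ k) = axis p (real i)" for i
    by (simp add: vec_eq_iff x2_def axis_def)
  ultimately show ?thesis
    by (auto intro: mutually_reachable_trans)
qed

theorem corollary3p6:
  fixes \<sigma> :: "real \<Rightarrow> real" and \<A> :: "(real^'d^'d) set"
  assumes "CARD('d) \<ge> 2"
    and "\<exists>L. lipschitz_on L UNIV \<sigma>"
    and "\<not> (\<exists>a c. \<forall>s. \<sigma> s = a * s + c)"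
    and "\<forall>l. {A $ l | A. A \<in> \<A>} = UNIV"
  shows "universal_interpolation (control_family \<sigma> \<A>)"
  unfolding universal_interpolation_def
proof (intro allI impI)
  fix \<epsilon> :: real and N :: nat and x y :: "nat \<Rightarrow> real^'d"
  assume "\<epsilon> > 0" and distinct: "\<forall>i<N. \<forall>j<N. i \<noteq> j \<longrightarrow> x i \<noteq> x j \<and> y i \<noteq> y j"
  obtain L where lip: "L-lipschitz_on UNIV \<sigma>"
    using assms(2) by blast
  obtain p q :: 'd where "p \<noteq> q"
    using assms(1) card_le_Suc0_iff_eq[of "UNIV :: 'd set"] by fastforce
  have "inj_on x {..<N}" and "inj_on y {..<N}"
    using distinct by (auto simp: inj_on_def)
  then have "mutually_reachable (control_family \<sigma> \<A>) N x (\<lambda>i. axis p (real i))"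
    and "mutually_reachable (control_family \<sigma> \<A>) N y (\<lambda>i. axis p (real i))"
    using mutually_reachable_standard_configuration[OF assms(4) lip assms(3) \<open>p \<noteq> q\<close>] by auto
  then have "reachable (control_family \<sigma> \<A>) N x y"
    by (meson mutually_reachable_def mutually_reachable_sym mutually_reachable_trans)
  then obtain \<phi> where "\<phi> \<in> flow_compositions (control_family \<sigma> \<A>)" and "\<forall>i<N. \<phi> (x i) = y i"
    unfolding reachable_def by blast
  with \<open>\<epsilon> > 0\<close> show "\<exists>\<phi>\<in>flow_compositions (control_family \<sigma> \<A>). \<forall>i<N. \<forall>l. \<bar>\<phi> (x i) $ l - y i $ l\<bar> \<le> \<epsilon>"
    by (intro bexI[of _ \<phi>]) auto
qed

end
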